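(* Let $n\ge 1$, $0<\nu\le 1$, $\rho>0$, and define on $\mathbb{R}^n$ $$f_0(\xi)=\exp(\rho|\xi|^\nu),\qquad f(\xi)=\exp\big(\rho(|\xi|^\nu\vee 1)\big).$$ Then for all $\xi,\eta\in\mathbb{R}^n$ the function $f$ satisfies: (i) $f(\xi)\le f(\xi-\eta)f(\eta)$ for all $\xi,\eta$; (ii) $f(\xi)\le f(\xi-\eta)f_0(\eta)^\nu$ whenever $|\xi|\wedge|\eta|\le|\xi-\eta|$; (iii) $|f(\xi)-f(\eta)|\,|\eta|^{1-\nu}\le |\xi-\eta|^{1-\nu}f(\xi-\eta)f(\eta)$ for all $\xi,\eta$; (iv) $|f(\xi)-f(\eta)|\,|\eta|^{1-\nu}\le C|\xi-\eta|^{1-\nu}f_0(\xi-\eta)^\nu f(\eta)$ whenever $|\xi|\wedge|\xi-\eta|\le|\eta|$; (v) $|f(\xi)-f(\eta)|\,|\eta|^{1-\nu}\le C|\xi-\eta|^{1-\nu}f(\xi-\eta)f_0(\eta)^\nu$ whenever $|\xi|\wedge|\eta|\le|\xi-\eta|$. In (iv) and (v) one can take $C=1$, except in the region $|\xi|\le|\xi-\eta|\le|\eta|$ where one can take $C=2^{1-\nu}$. Moreover, the function $f_0$ satisfies the same estimates (i)–(v) as $f$ (with $f$ replaced by $f_0$ throughout).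
   Context: $a\vee b=\max(a,b)$, $a\wedge b=\min(a,b)$. *)

theory Defs
  imports "HOL-Analysis.Analysis"
begin

text \<open>Real power of a nonnegative base with the convention t^0 = 1 (also for t = 0),
  unlike Isabelle's powr where 0 powr 0 = 0.\<close>
definition pw :: "real \<Rightarrow> real \<Rightarrow> real" where
  "pw t a = (if a = 0 then 1 else t powr a)"

definition f0 :: "real \<Rightarrow> real \<Rightarrow> 'a::euclidean_space \<Rightarrow> real" where
  "f0 \<rho> \<nu> \<xi> = exp (\<rho> * norm \<xi> powr \<nu>)"

definition f :: "real \<Rightarrow> real \<Rightarrow> 'a::euclidean_space \<Rightarrow> real" where
  "f \<rho> \<nu> \<xi> = exp (\<rho> * max (norm \<xi> powr \<nu>) 1)"

definition Cst :: "real \<Rightarrow> 'a::euclidean_space \<Rightarrow> 'a \<Rightarrow> real" where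
  "Cst \<nu> \<xi> \<eta> = (if norm \<xi> \<le> norm (\<xi> - \<eta>) \<and> norm (\<xi> - \<eta>) \<le> norm \<eta>
                   then 2 powr (1 - \<nu>) else 1)"

definition estimates ::
  "real \<Rightarrow> ('a::euclidean_space \<Rightarrow> real) \<Rightarrow> ('a \<Rightarrow> real) \<Rightarrow> bool" where
  "estimates \<nu> g F0 \<longleftrightarrow>
    (\<forall>\<xi> \<eta>.
      g \<xi> \<le> g (\<xi> - \<eta>) * g \<eta>
    \<and> (min (norm \<xi>) (norm \<eta>) \<le> norm (\<xi> - \<eta>) \<longrightarrow>
         g \<xi> \<le> g (\<xi> - \<eta>) * F0 \<eta> powr \<nu>)
    \<and> \<bar>g \<xi> - g \<eta>\<bar> * pw (norm \<eta>) (1 - \<nu>)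
         \<le> pw (norm (\<xi> - \<eta>)) (1 - \<nu>) * g (\<xi> - \<eta>) * g \<eta>
    \<and> (min (norm \<xi>) (norm (\<xi> - \<eta>)) \<le> norm \<eta> \<longrightarrow>
         \<bar>g \<xi> - g \<eta>\<bar> * pw (norm \<eta>) (1 - \<nu>)
           \<le> Cst \<nu> \<xi> \<eta> * pw (norm (\<xi> - \<eta>)) (1 - \<nu>) * F0 (\<xi> - \<eta>) powr \<nu> * g \<eta>)
    \<and> (min (norm \<xi>) (norm \<eta>) \<le> norm (\<xi> - \<eta>) \<longrightarrow>
         \<bar>g \<xi> - g \<eta>\<bar> * pw (norm \<eta>) (1 - \<nu>)
           \<le> Cst \<nu> \<xi> \<eta> * pw (norm (\<xi> - \<eta>)) (1 - \<nu>) * g (\<xi> - \<eta>) * F0 \<eta> powr \<nu>))"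

end

theory Submission
  imports Defs
begin

(*
  With a = |xi|, b = |eta|, c = |xi - eta| the estimates become inequalities between the sides
  of a triangle, and both weights have the form x |-> exp (h |x|) for the profile
  h t = rho * max (t^nu) m, with m = 1 for f and m = 0 for f0.  Only three properties of h
  are used: it is monotone, it dominates rho t^nu, and it grows no faster than rho t^nu.
  Concavity of t^nu, in the form of the tangent bound (y^nu - x^nu) x^(1-nu) <= nu (y - x),
  makes h subadditive and even gives h a <= h c + rho nu b^nu when b <= c.  The difference
  estimates then compare |e^(h a) - e^(h b)| with e^(h b) |h a - h b|; when |eta| < |xi| the
  factor e^(h a - h b) - 1 is instead bounded through the convexity of exp along a chord.
*)

lemma pw_eq_powr: "0 < x \<Longrightarrow> pw x e = x powr e"
  by (simp add: pw_def)

lemma pw_nonneg: "0 \<le> pw x e"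
  by (simp add: pw_def)

lemma pw_mono: "0 \<le> x \<Longrightarrow> x \<le> y \<Longrightarrow> 0 \<le> e \<Longrightarrow> pw x e \<le> pw y e"
  by (simp add: pw_def powr_mono2)

lemma powr_mult_pw_one_minus: "0 < \<nu> \<Longrightarrow> 0 \<le> x \<Longrightarrow> x powr \<nu> * pw x (1 - \<nu>) = x"
  by (cases "x = 0") (simp_all add: pw_eq_powr flip: powr_add)

lemma pw_le_powr_mult_pw:
  assumes "0 \<le> e" "0 < k" "0 \<le> b" "b \<le> k * c"
  shows "pw b e \<le> k powr e * pw c e"
proof -
  have "pw b e \<le> pw (k * c) e"
    using assms by (intro pw_mono) auto
  also have "\<dots> = k powr e * pw c e"
    using assms by (simp add: pw_def powr_mult)
  finally show ?thesis .
qed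

lemma powr_diff_mult_powr_le:
  fixes \<nu> x y :: real
  assumes "0 < \<nu>" "\<nu> \<le> 1" "0 < x" "0 < y"
  shows "(y powr \<nu> - x powr \<nu>) * x powr (1 - \<nu>) \<le> \<nu> * (y - x)"
proof -
  have "y powr \<nu> * x powr (1 - \<nu>) \<le> \<nu> * y + (1 - \<nu>) * x"
    using Youngs_inequality_0[of \<nu> "1 - \<nu>" y x] assms by simp
  moreover have "x powr \<nu> * x powr (1 - \<nu>) = x"
    using assms by (simp flip: powr_add)
  ultimately show ?thesis
    by (simp add: algebra_simps)
qed

lemma powr_diff_mult_pw_le:
  fixes \<nu> x y :: real
  assumes "0 < \<nu>" "\<nu> \<le> 1" "0 \<le> x" "x \<le> y"
  shows "(y powr \<nu> - x powr \<nu>) * pw y (1 - \<nu>) \<le> y - x"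
proof -
  have "x powr \<nu> * pw x (1 - \<nu>) \<le> x powr \<nu> * pw y (1 - \<nu>)"
    using assms by (intro mult_left_mono pw_mono) auto
  then show ?thesis
    using powr_mult_pw_one_minus[of \<nu> x] powr_mult_pw_one_minus[of \<nu> y] assms
    by (simp add: algebra_simps)
qed

lemma powr_add_le_concave:
  fixes \<nu> b c :: real
  assumes "0 < \<nu>" "\<nu> \<le> 1" "0 \<le> b" "b \<le> c"
  shows "(b + c) powr \<nu> \<le> c powr \<nu> + \<nu> * b powr \<nu>"
proof (cases "b = 0")
  case False
  then have "0 < b" "0 < c"
    using assms by auto
  have "((b + c) powr \<nu> - c powr \<nu>) * c powr (1 - \<nu>) \<le> \<nu> * b"
    using powr_diff_mult_powr_le[of \<nu> c "b + c"] assms \<open>0 < b\<close> \<open>0 < c\<close> by simp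
  also have "\<dots> = \<nu> * b powr \<nu> * b powr (1 - \<nu>)"
    using \<open>0 < b\<close> by (simp flip: powr_add)
  also have "\<dots> \<le> \<nu> * b powr \<nu> * c powr (1 - \<nu>)"
    using assms by (intro mult_left_mono powr_mono2) auto
  finally show ?thesis
    using \<open>0 < c\<close> by (simp add: mult_right_le_imp_le)
qed simp

lemma powr_subadditive:
  fixes \<nu> x y :: real
  assumes "0 < \<nu>" "\<nu> \<le> 1" "0 \<le> x" "0 \<le> y"
  shows "(x + y) powr \<nu> \<le> x powr \<nu> + y powr \<nu>"
proof -
  have "\<nu> * x powr \<nu> \<le> x powr \<nu>" "\<nu> * y powr \<nu> \<le> y powr \<nu>"
    using assms by (simp_all add: mult_left_le_one_le)
  then show ?thesis
    using powr_add_le_concave[of \<nu> x y] powr_add_le_concave[of \<nu> y x] assms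
    by (cases "x \<le> y") (simp_all add: add.commute)
qed

lemma exp_diff_le_exp_mult_diff: "(x::real) \<le> y \<Longrightarrow> exp y - exp x \<le> exp y * (y - x)"
proof -
  have "exp y * (1 + (x - y)) \<le> exp y * exp (x - y)"
    by simp
  then show ?thesis
    by (simp add: algebra_simps flip: exp_add)
qed

lemma abs_exp_diff_le_exp_max: "\<bar>exp (x::real) - exp y\<bar> \<le> exp (max x y)"
  by (simp add: max_def abs_if)

lemma exp_minus_one_mult_le:
  fixes d Y p q :: real
  assumes "0 \<le> d" "0 \<le> Y" "0 \<le> p" "p \<le> q" "0 < q" "d * q \<le> Y * p"
  shows "(exp d - 1) * q \<le> p * (exp Y - 1)"
proof -
  define s where "s = p / q"
  have s: "0 \<le> s" "s \<le> 1" "p = s * q"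
    using assms by (auto simp: s_def)
  have "d \<le> s * Y"
    using assms s by (simp add: mult.commute mult.left_commute)
  then have "exp d \<le> exp ((1 - s) *\<^sub>R 0 + s *\<^sub>R Y)"
    by simp
  also have "\<dots> \<le> (1 - s) * exp 0 + s * exp Y"
    using convex_onD[OF exp_convex] s by blast
  finally have "exp d - 1 \<le> s * (exp Y - 1)"
    by (simp add: algebra_simps)
  then have "(exp d - 1) * q \<le> s * (exp Y - 1) * q"
    using \<open>0 < q\<close> by (simp add: mult_right_mono)
  then show ?thesis
    using s by (simp add: ac_simps)
qed

lemma two_mult_le_exp: "2 * x \<le> exp (x :: real)"
proof (cases "0 \<le> x")
  case True
  have "0 \<le> (x - 1)\<^sup>2 + 1"
    by simp
  then have "2 * x \<le> 1 + x + x\<^sup>2 / 2"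
    by (simp add: power2_eq_square algebra_simps)
  then show ?thesis
    using exp_lower_Taylor_quadratic[OF True] by linarith
qed (use exp_gt_zero[of x] in linarith)

definition Cst_sides :: "real \<Rightarrow> real \<Rightarrow> real \<Rightarrow> real \<Rightarrow> real" where
  "Cst_sides \<nu> a b c = (if a \<le> c \<and> c \<le> b then 2 powr (1 - \<nu>) else 1)"

lemma Cst_eq_Cst_sides: "Cst \<nu> \<xi> \<eta> = Cst_sides \<nu> (norm \<xi>) (norm \<eta>) (norm (\<xi> - \<eta>))"
  by (simp add: Cst_def Cst_sides_def)

lemma one_le_Cst_sides: "\<nu> \<le> 1 \<Longrightarrow> 1 \<le> Cst_sides \<nu> a b c"
  by (simp add: Cst_sides_def ge_one_powr_ge_zero)

lemma pw_le_Cst_sides_mult: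
  assumes "\<nu> \<le> 1" "0 \<le> a" "0 \<le> b" "b \<le> a + c" "b \<le> c \<or> a \<le> c"
  shows "pw b (1 - \<nu>) \<le> Cst_sides \<nu> a b c * pw c (1 - \<nu>)"
proof (cases "b \<le> c")
  case True
  then have "pw b (1 - \<nu>) \<le> pw c (1 - \<nu>)"
    using assms by (intro pw_mono) auto
  also have "\<dots> \<le> Cst_sides \<nu> a b c * pw c (1 - \<nu>)"
    using mult_right_mono[OF one_le_Cst_sides[OF assms(1)] pw_nonneg] by simp
  finally show ?thesis .
next
  case False
  then have "Cst_sides \<nu> a b c = 2 powr (1 - \<nu>)"
    using assms by (simp add: Cst_sides_def)
  moreover have "b \<le> 2 * c"
    using assms False by linarith
  ultimately show ?thesis
    using assms by (simp add: pw_le_powr_mult_pw)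
qed

locale radial_profile =
  fixes \<nu> \<rho> :: real and h :: "real \<Rightarrow> real"
  assumes exponent_pos: "0 < \<nu>" and exponent_le_one: "\<nu> \<le> 1" and scale_pos: "0 < \<rho>"
    and profile_mono: "0 \<le> x \<Longrightarrow> x \<le> y \<Longrightarrow> h x \<le> h y"
    and profile_lower: "0 \<le> x \<Longrightarrow> \<rho> * x powr \<nu> \<le> h x"
    and profile_increment: "0 \<le> x \<Longrightarrow> x \<le> y \<Longrightarrow> h y - h x \<le> \<rho> * (y powr \<nu> - x powr \<nu>)"
begin

lemma profile_le_powr_increment:
  assumes "0 \<le> a" "0 \<le> b" "0 \<le> c" "a \<le> b + c"
  shows "h a \<le> h c + \<rho> * ((b + c) powr \<nu> - c powr \<nu>)"
proof -
  have "0 \<le> \<rho> * ((b + c) powr \<nu> - c powr \<nu>)"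
    using assms exponent_pos scale_pos by (simp add: powr_mono2)
  show ?thesis
  proof (cases "a \<le> c")
    case True
    then show ?thesis
      using profile_mono[OF \<open>0 \<le> a\<close> True] \<open>0 \<le> \<rho> * ((b + c) powr \<nu> - c powr \<nu>)\<close>
      by linarith
  next
    case False
    have "h a - h c \<le> \<rho> * (a powr \<nu> - c powr \<nu>)"
      using profile_increment assms False by simp
    also have "\<dots> \<le> \<rho> * ((b + c) powr \<nu> - c powr \<nu>)"
      using assms exponent_pos scale_pos by (intro mult_left_mono diff_right_mono powr_mono2) auto
    finally show ?thesis
      by simp
  qed
qed

lemma profile_subadditive:
  assumes "0 \<le> a" "0 \<le> b" "0 \<le> c" "a \<le> b + c"
  shows "h a \<le> h b + h c"
proof -
  have "\<rho> * ((b + c) powr \<nu> - c powr \<nu>) \<le> \<rho> * b powr \<nu>"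
    using powr_subadditive[of \<nu> b c] exponent_pos exponent_le_one scale_pos assms by simp
  then show ?thesis
    using profile_le_powr_increment[OF assms] profile_lower[OF \<open>0 \<le> b\<close>] by linarith
qed

lemma profile_le_add_powr:
  assumes "0 \<le> a" "0 \<le> b" "b \<le> c" "a \<le> b + c"
  shows "h a \<le> h c + \<rho> * \<nu> * b powr \<nu>"
proof -
  have "\<rho> * ((b + c) powr \<nu> - c powr \<nu>) \<le> \<rho> * \<nu> * b powr \<nu>"
    using powr_add_le_concave[of \<nu> b c] exponent_pos exponent_le_one scale_pos assms
    by (simp add: mult.assoc)
  then show ?thesis
    using profile_le_powr_increment[of a b c] assms by linarith
qed

lemma profile_increment_mult_pw:
  assumes "0 \<le> x" "x \<le> y"
  shows "(h y - h x) * pw y (1 - \<nu>) \<le> \<rho> * (y - x)"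
proof -
  have "(h y - h x) * pw y (1 - \<nu>) \<le> \<rho> * (y powr \<nu> - x powr \<nu>) * pw y (1 - \<nu>)"
    using profile_increment[OF assms] pw_nonneg by (rule mult_right_mono)
  also have "\<dots> \<le> \<rho> * (y - x)"
    using powr_diff_mult_pw_le[OF exponent_pos exponent_le_one assms] scale_pos
    by (simp add: mult.assoc)
  finally show ?thesis .
qed

lemma profile_increment_mult_powr:
  assumes "0 < x" "x \<le> y"
  shows "(h y - h x) * x powr (1 - \<nu>) \<le> \<rho> * \<nu> * (y - x)"
proof -
  have "(h y - h x) * x powr (1 - \<nu>) \<le> \<rho> * (y powr \<nu> - x powr \<nu>) * x powr (1 - \<nu>)"
    using profile_increment assms by (intro mult_right_mono) auto
  also have "\<dots> \<le> \<rho> * \<nu> * (y - x)"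
    using powr_diff_mult_powr_le[OF exponent_pos exponent_le_one] assms scale_pos
    by (simp add: mult.assoc)
  finally show ?thesis .
qed

context
  fixes a b c :: real
  assumes sides_nonneg: "0 \<le> a" "0 \<le> b" "0 \<le> c"
    and triangle: "a \<le> b + c" "b \<le> a + c"
begin

lemma exp_profile_triangle: "exp (h a) \<le> exp (h c) * exp (h b)"
  using profile_subadditive[OF sides_nonneg triangle(1)] by (simp add: add.commute flip: exp_add)

lemma exp_profile_triangle_sharp:
  assumes "min a b \<le> c"
  shows "exp (h a) \<le> exp (h c) * exp (\<rho> * b powr \<nu>) powr \<nu>"
proof -
  have "h a \<le> h c + \<rho> * \<nu> * b powr \<nu>"
  proof (cases "a \<le> c")
    case True
    have "0 \<le> \<rho> * \<nu> * b powr \<nu>"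
      using exponent_pos scale_pos by simp
    then show ?thesis
      using profile_mono[OF sides_nonneg(1) True] by linarith
  next
    case False
    then show ?thesis
      using profile_le_add_powr[of a b c] assms sides_nonneg triangle by auto
  qed
  then show ?thesis
    by (simp add: exp_powr_real mult_ac flip: exp_add)
qed

lemma exp_profile_increase_shortest_side:
  assumes "c \<le> a" "a \<le> b"
  shows "\<bar>exp (h a) - exp (h b)\<bar> * pw b (1 - \<nu>)
    \<le> pw c (1 - \<nu>) * exp (\<rho> * \<nu> * c powr \<nu>) * exp (h b)"
proof (cases "a = b")
  case False
  define Y where "Y = \<rho> * \<nu> * c powr \<nu>"
  have "0 < a"
    using triangle assms False by linarith
  have increase: "0 \<le> h b - h a"
    using profile_mono sides_nonneg assms by simp
  have "pw b (1 - \<nu>) \<le> 2 powr (1 - \<nu>) * pw a (1 - \<nu>)"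
    using exponent_le_one triangle assms sides_nonneg by (intro pw_le_powr_mult_pw) auto
  also have "\<dots> \<le> 2 * a powr (1 - \<nu>)"
    unfolding pw_eq_powr[OF \<open>0 < a\<close>]
    using powr_mono[of "1 - \<nu>" 1 2] exponent_pos by (intro mult_right_mono) auto
  finally have "pw b (1 - \<nu>) \<le> 2 * a powr (1 - \<nu>)" .
  then have "(h b - h a) * pw b (1 - \<nu>) \<le> (h b - h a) * (2 * a powr (1 - \<nu>))"
    using increase by (rule mult_left_mono)
  also have "\<dots> = 2 * ((h b - h a) * a powr (1 - \<nu>))"
    by simp
  also have "\<dots> \<le> 2 * (\<rho> * \<nu> * (b - a))"
    using profile_increment_mult_powr[OF \<open>0 < a\<close> assms(2)] by simp
  also have "\<dots> \<le> 2 * (\<rho> * \<nu> * c)"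
    using triangle scale_pos exponent_pos by simp
  also have "\<dots> = 2 * Y * pw c (1 - \<nu>)"
    by (simp add: Y_def powr_mult_pw_one_minus[OF exponent_pos sides_nonneg(3)] mult.assoc)
  finally have weighted: "(h b - h a) * pw b (1 - \<nu>) \<le> 2 * Y * pw c (1 - \<nu>)" .
  have "\<bar>exp (h a) - exp (h b)\<bar> = exp (h b) - exp (h a)"
    using increase by simp
  then have "\<bar>exp (h a) - exp (h b)\<bar> * pw b (1 - \<nu>) \<le> exp (h b) * (h b - h a) * pw b (1 - \<nu>)"
    using exp_diff_le_exp_mult_diff[of "h a" "h b"] increase
    by (simp add: mult_right_mono pw_nonneg)
  also have "\<dots> \<le> exp (h b) * (2 * Y * pw c (1 - \<nu>))"
    using weighted by (simp add: mult.assoc)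
  also have "\<dots> \<le> exp (h b) * (exp Y * pw c (1 - \<nu>))"
    using two_mult_le_exp[of Y] pw_nonneg by (intro mult_left_mono mult_right_mono) auto
  finally show ?thesis
    by (simp add: Y_def ac_simps)
qed (simp add: pw_nonneg)

lemma exp_profile_decrease_shortest_side:
  assumes "c \<le> b" "b \<le> a"
  shows "\<bar>exp (h a) - exp (h b)\<bar> * pw b (1 - \<nu>)
    \<le> pw c (1 - \<nu>) * exp (\<rho> * \<nu> * c powr \<nu>) * exp (h b)"
proof (cases "a = b")
  case False
  define Y where "Y = \<rho> * \<nu> * c powr \<nu>"
  have "0 < b"
    using triangle assms False by linarith
  have increase: "0 \<le> h a - h b"
    using profile_mono sides_nonneg assms by simp
  have "(h a - h b) * pw b (1 - \<nu>) \<le> \<rho> * \<nu> * (a - b)"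
    using profile_increment_mult_powr[OF \<open>0 < b\<close> assms(2)] by (simp add: pw_eq_powr[OF \<open>0 < b\<close>])
  also have "\<dots> \<le> \<rho> * \<nu> * c"
    using triangle scale_pos exponent_pos by simp
  also have "\<dots> = Y * pw c (1 - \<nu>)"
    by (simp add: Y_def powr_mult_pw_one_minus[OF exponent_pos sides_nonneg(3)] mult.assoc)
  finally have "(h a - h b) * pw b (1 - \<nu>) \<le> Y * pw c (1 - \<nu>)" .
  then have "(exp (h a - h b) - 1) * pw b (1 - \<nu>) \<le> pw c (1 - \<nu>) * (exp Y - 1)"
    using exp_minus_one_mult_le[OF increase _ pw_nonneg] pw_mono[of c b "1 - \<nu>"]
      assms sides_nonneg exponent_pos exponent_le_one scale_pos \<open>0 < b\<close>
    by (simp add: Y_def pw_eq_powr)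
  moreover have "\<bar>exp (h a) - exp (h b)\<bar> = (exp (h a - h b) - 1) * exp (h b)"
    using increase by (simp add: algebra_simps flip: exp_add)
  ultimately have "\<bar>exp (h a) - exp (h b)\<bar> * pw b (1 - \<nu>) \<le> pw c (1 - \<nu>) * (exp Y - 1) * exp (h b)"
    by (simp add: mult.commute mult.left_commute)
  also have "\<dots> \<le> pw c (1 - \<nu>) * exp Y * exp (h b)"
    using pw_nonneg by (intro mult_right_mono mult_left_mono) auto
  finally show ?thesis
    by (simp add: Y_def)
qed (simp add: pw_nonneg)

lemma exp_profile_diff_triangle:
  "\<bar>exp (h a) - exp (h b)\<bar> * pw b (1 - \<nu>) \<le> pw c (1 - \<nu>) * exp (h c) * exp (h b)"
proof -
  consider "a \<le> b" | "b \<le> a" "b \<le> c" | "c \<le> b" "b \<le> a"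
    by linarith
  then show ?thesis
  proof cases
    case 1
    then have increase: "h a \<le> h b"
      using profile_mono sides_nonneg by simp
    have "(h b - h a) * pw b (1 - \<nu>) \<le> \<rho> * (b - a)"
      using profile_increment_mult_pw[OF sides_nonneg(1) 1] .
    also have "\<dots> \<le> \<rho> * c"
      using triangle scale_pos by simp
    also have "\<dots> = \<rho> * c powr \<nu> * pw c (1 - \<nu>)"
      using powr_mult_pw_one_minus[OF exponent_pos sides_nonneg(3)] by (simp add: mult.assoc)
    also have "\<dots> \<le> exp (h c) * pw c (1 - \<nu>)"
    proof -
      have "\<rho> * c powr \<nu> \<le> exp (h c)"
        using profile_lower[OF sides_nonneg(3)] exp_ge_add_one_self[of "h c"] by linarith
      then show ?thesis
        by (rule mult_right_mono) (simp add: pw_nonneg)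
    qed
    finally have weighted: "(h b - h a) * pw b (1 - \<nu>) \<le> exp (h c) * pw c (1 - \<nu>)" .
    have "\<bar>exp (h a) - exp (h b)\<bar> * pw b (1 - \<nu>) \<le> exp (h b) * (h b - h a) * pw b (1 - \<nu>)"
      using exp_diff_le_exp_mult_diff[OF increase] increase by (simp add: mult_right_mono pw_nonneg)
    also have "\<dots> \<le> exp (h b) * (exp (h c) * pw c (1 - \<nu>))"
      using weighted by (simp add: mult.assoc)
    finally show ?thesis
      by (simp add: ac_simps)
  next
    case 2
    have "\<bar>exp (h a) - exp (h b)\<bar> \<le> exp (h a)"
      using abs_exp_diff_le_exp_max[of "h a" "h b"] profile_mono[OF sides_nonneg(2) 2(1)]
      by (simp add: max_def)
    also have "\<dots> \<le> exp (h c) * exp (h b)"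
      by (rule exp_profile_triangle)
    finally have "\<bar>exp (h a) - exp (h b)\<bar> \<le> exp (h c) * exp (h b)" .
    moreover have "pw b (1 - \<nu>) \<le> pw c (1 - \<nu>)"
      using 2 sides_nonneg exponent_le_one by (intro pw_mono) auto
    ultimately have "\<bar>exp (h a) - exp (h b)\<bar> * pw b (1 - \<nu>) \<le> exp (h c) * exp (h b) * pw c (1 - \<nu>)"
      by (rule mult_mono) (auto simp: pw_nonneg)
    then show ?thesis
      by (simp add: ac_simps)
  next
    case 3
    have "\<rho> * \<nu> * c powr \<nu> \<le> \<rho> * c powr \<nu>"
      using exponent_pos exponent_le_one scale_pos by (simp add: mult_left_le_one_le)
    then have "exp (\<rho> * \<nu> * c powr \<nu>) \<le> exp (h c)"
      using profile_lower[OF sides_nonneg(3)] by simp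
    then have "pw c (1 - \<nu>) * exp (\<rho> * \<nu> * c powr \<nu>) * exp (h b)
        \<le> pw c (1 - \<nu>) * exp (h c) * exp (h b)"
      by (intro mult_right_mono mult_left_mono) (auto simp: pw_nonneg)
    with exp_profile_decrease_shortest_side[OF 3] show ?thesis
      by (rule order_trans)
  qed
qed

lemma exp_profile_diff_triangle_sharp_c:
  assumes "min a c \<le> b"
  shows "\<bar>exp (h a) - exp (h b)\<bar> * pw b (1 - \<nu>)
    \<le> Cst_sides \<nu> a b c * pw c (1 - \<nu>) * exp (\<rho> * c powr \<nu>) powr \<nu> * exp (h b)"
proof -
  define K where "K = Cst_sides \<nu> a b c"
  define B where "B = pw c (1 - \<nu>) * exp (\<rho> * \<nu> * c powr \<nu>) * exp (h b)"
  have "1 \<le> K"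
    unfolding K_def using exponent_le_one by (rule one_le_Cst_sides)
  have "\<bar>exp (h a) - exp (h b)\<bar> * pw b (1 - \<nu>) \<le> K * B"
  proof -
    consider "a \<le> b" "b \<le> c \<or> a \<le> c" | "c \<le> a" "c \<le> b"
      using assms by linarith
    then show ?thesis
    proof cases
      case 1
      have "\<bar>exp (h a) - exp (h b)\<bar> \<le> exp (h b)"
        using abs_exp_diff_le_exp_max[of "h a" "h b"] profile_mono[OF sides_nonneg(1) 1(1)]
        by (simp add: max_def)
      moreover have "pw b (1 - \<nu>) \<le> K * pw c (1 - \<nu>)"
        unfolding K_def using pw_le_Cst_sides_mult exponent_le_one sides_nonneg triangle 1 by blast
      ultimately have "\<bar>exp (h a) - exp (h b)\<bar> * pw b (1 - \<nu>) \<le> exp (h b) * (K * pw c (1 - \<nu>))"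
        by (rule mult_mono) (auto simp: pw_nonneg)
      also have "\<dots> \<le> K * B"
      proof -
        have "1 \<le> exp (\<rho> * \<nu> * c powr \<nu>)"
          using exponent_pos scale_pos by simp
        moreover have "0 \<le> exp (h b) * (K * pw c (1 - \<nu>))"
          using \<open>1 \<le> K\<close> by (simp add: pw_nonneg)
        ultimately have "exp (h b) * (K * pw c (1 - \<nu>)) * 1
            \<le> exp (h b) * (K * pw c (1 - \<nu>)) * exp (\<rho> * \<nu> * c powr \<nu>)"
          by (rule mult_left_mono)
        then show ?thesis
          by (simp add: B_def ac_simps)
      qed
      finally show ?thesis .
    next
      case 2
      then have "\<bar>exp (h a) - exp (h b)\<bar> * pw b (1 - \<nu>) \<le> B"
        unfolding B_def
        by (cases "a \<le> b")
          (simp_all add: exp_profile_increase_shortest_side exp_profile_decrease_shortest_side)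
      moreover have "B \<le> K * B"
        using mult_right_mono[OF \<open>1 \<le> K\<close>, of B] by (simp add: B_def pw_nonneg)
      ultimately show ?thesis
        by (rule order_trans)
    qed
  qed
  then show ?thesis
    by (simp add: K_def B_def exp_powr_real mult_ac)
qed

lemma exp_profile_diff_triangle_sharp_b:
  assumes "min a b \<le> c"
  shows "\<bar>exp (h a) - exp (h b)\<bar> * pw b (1 - \<nu>)
    \<le> Cst_sides \<nu> a b c * pw c (1 - \<nu>) * exp (h c) * exp (\<rho> * b powr \<nu>) powr \<nu>"
proof -
  have "max (h a) (h b) \<le> h c + \<rho> * \<nu> * b powr \<nu>"
  proof -
    have Z: "0 \<le> \<rho> * \<nu> * b powr \<nu>"
      using scale_pos exponent_pos by simp
    consider "b \<le> c" | "a \<le> c" "c \<le> b"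
      using assms by linarith
    then show ?thesis
    proof cases
      case 1
      then show ?thesis
        using profile_le_add_powr[of a b c] profile_mono[of b c] sides_nonneg triangle Z by simp
    next
      case 2
      have "h b \<le> h c + \<rho> * \<nu> * a powr \<nu>"
        using profile_le_add_powr[of b a c] sides_nonneg triangle 2 by simp
      also have "\<dots> \<le> h c + \<rho> * \<nu> * b powr \<nu>"
        using 2 sides_nonneg scale_pos exponent_pos by (simp add: powr_mono2)
      finally show ?thesis
        using profile_mono[of a c] sides_nonneg 2 Z by simp
    qed
  qed
  then have "exp (max (h a) (h b)) \<le> exp (h c) * exp (\<rho> * \<nu> * b powr \<nu>)"
    by (simp flip: exp_add)
  with abs_exp_diff_le_exp_max
  have "\<bar>exp (h a) - exp (h b)\<bar> \<le> exp (h c) * exp (\<rho> * \<nu> * b powr \<nu>)"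
    by (rule order_trans)
  moreover have "pw b (1 - \<nu>) \<le> Cst_sides \<nu> a b c * pw c (1 - \<nu>)"
    using exponent_le_one sides_nonneg triangle assms
    by (intro pw_le_Cst_sides_mult) (auto simp: min_le_iff_disj)
  ultimately have "\<bar>exp (h a) - exp (h b)\<bar> * pw b (1 - \<nu>)
    \<le> exp (h c) * exp (\<rho> * \<nu> * b powr \<nu>) * (Cst_sides \<nu> a b c * pw c (1 - \<nu>))"
    by (rule mult_mono) (auto simp: pw_nonneg)
  then show ?thesis
    by (simp add: exp_powr_real ac_simps)
qed

end

lemma estimates_exp_profile: "estimates \<nu> (\<lambda>x::'a::euclidean_space. exp (h (norm x))) (f0 \<rho> \<nu>)"
proof -
  have triangle: "norm \<xi> \<le> norm \<eta> + norm (\<xi> - \<eta>)" "norm \<eta> \<le> norm \<xi> + norm (\<xi> - \<eta>)"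
    for \<xi> \<eta> :: 'a
    using norm_triangle_sub[of \<xi> \<eta>] norm_triangle_sub[of \<eta> \<xi>] by (simp_all add: norm_minus_commute)
  note sides = norm_ge_zero norm_ge_zero norm_ge_zero triangle
  show ?thesis
    unfolding estimates_def f0_def Cst_eq_Cst_sides
    using exp_profile_triangle[OF sides] exp_profile_triangle_sharp[OF sides]
      exp_profile_diff_triangle[OF sides] exp_profile_diff_triangle_sharp_c[OF sides]
      exp_profile_diff_triangle_sharp_b[OF sides]
    by blast
qed

end

lemma radial_profile_max_powr:
  assumes "0 < \<nu>" "\<nu> \<le> 1" "0 < \<rho>" "0 \<le> m"
  shows "radial_profile \<nu> \<rho> (\<lambda>t. \<rho> * max (t powr \<nu>) m)"
proof
  fix x y :: real
  assume "0 \<le> x" "x \<le> y"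
  then have "x powr \<nu> \<le> y powr \<nu>"
    using assms by (simp add: powr_mono2)
  then show "\<rho> * max (x powr \<nu>) m \<le> \<rho> * max (y powr \<nu>) m"
    and "\<rho> * max (y powr \<nu>) m - \<rho> * max (x powr \<nu>) m \<le> \<rho> * (y powr \<nu> - x powr \<nu>)"
    using assms by (simp_all add: mult_left_mono flip: right_diff_distrib)
qed (use assms in auto)

theorem lemma3p1:
  fixes \<rho> \<nu> :: real
  assumes "0 < \<nu>" and "\<nu> \<le> 1" and "0 < \<rho>"
  shows "estimates \<nu> (f \<rho> \<nu> :: 'a::euclidean_space \<Rightarrow> real) (f0 \<rho> \<nu>)
       \<and> estimates \<nu> (f0 \<rho> \<nu> :: 'a \<Rightarrow> real) (f0 \<rho> \<nu>)"
proof -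
  have estimates_max: "estimates \<nu> (\<lambda>x::'a. exp (\<rho> * max (norm x powr \<nu>) m)) (f0 \<rho> \<nu>)"
    if "0 \<le> m" for m
    using radial_profile.estimates_exp_profile[OF radial_profile_max_powr[OF assms that]] by simp
  have weights: "(\<lambda>x::'a. exp (\<rho> * max (norm x powr \<nu>) 1)) = f \<rho> \<nu>"
    "(\<lambda>x::'a. exp (\<rho> * max (norm x powr \<nu>) 0)) = f0 \<rho> \<nu>"
    by (simp_all add: fun_eq_iff f_def f0_def)
  show ?thesis
    using estimates_max[of 1] estimates_max[of 0] unfolding weights by simp
qed

end
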